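(* Let $N>M>0$ be integers and consider the Lax function $$\mathcal{L}=p^{-M}\prod_{i=1}^{N}(p+u^i),$$ where $u^1,\dots,u^N$ are functions of $x$ and of the times $\tau_1,\tau_2,\dots$ (with $u^i\neq 0$). The hierarchy $$\frac{\partial \mathcal L}{\partial \tau_n}=\big\{(\mathcal L^{\frac{n}{N-M}})_+,\mathcal L\big\}_{PB},\qquad n=1,2,\dots,$$ is Hamiltonian with respect to the Poisson bracket of hydrodynamic type determined by the flat, non-degenerate contravariant metric $$g^{ij}(u)=\begin{cases}\big[1-(N-M)\big]\,u^iu^i, & i=j,\\ u^iu^j,& i\neq j,\end{cases}\qquad i,j=1,\dots,N,$$ with Hamiltonians given (up to a suitable nonzero normalisation constant for each $n$) by $H^{(n)}=\int Q^{(n)}\,dx$, where $$Q^{(n)}=\sum_{\{r_1,\dots,r_N\ge 0:\ \sum_i r_i=n\}}\ \prod_{i=1}^{N}\binom{\frac{n}{N-M}}{r_i}(u^i)^{r_i}$$ is the coefficient of $p^0$ in $\mathcal L^{\frac{n}{N-M}}$.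
   Context: $\{f,g\}_{PB}=p\,(\partial_pf\,\partial_xg-\partial_xf\,\partial_pg)$. The power $\mathcal L^{\frac{n}{N-M}}$ is expanded formally as a Laurent series in $p$ at $p=\infty$ (note $\mathcal L^{1/(N-M)}=p(1+O(p^{-1}))$), and $(\cdot)_+$ denotes the projection onto non-negative powers of $p$. Binomial coefficients with non-integer upper entry are $\binom{a}{b}=\frac{\Gamma(a+1)}{\Gamma(a-b+1)\Gamma(b+1)}$. The Poisson bracket of hydrodynamic type determined by a flat non-degenerate contravariant metric $g^{ij}$ is $\{u^i(x),u^j(y)\}=g^{ij}(u(x))\delta'(x-y)+\Gamma^{ij}_k(u(x))u^k_x\delta(x-y)$ with $\Gamma^{ij}_k=-g^{is}\Gamma^j_{sk}$, where $\Gamma^j_{sk}$ are the Christoffel symbols of the Levi-Civita connection of the metric $(g^{ij})^{-1}$; the Hamiltonian flow of a functional $H=\int h(u)\,dx$ is $u^i_\tau=\big(g^{ij}\frac{d}{dx}+\Gamma^{ij}_ku^k_x\big)\frac{\delta H}{\delta u^j}$ (summation over repeated indices). *)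

theory Defs
  imports "HOL-Analysis.Analysis" "HOL-Computational_Algebra.Formal_Power_Series"
begin

text \<open>Fields u = (u^1,...,u^N) are vectors in real^'N with N = CARD('N).
  M is the integer of the Lax function; alpha = n/(N-M).\<close>

definition alpha :: "nat \<Rightarrow> nat \<Rightarrow> nat \<Rightarrow> real" where
  "alpha N M n = real n / (real N - real M)"

definition Lax :: "nat \<Rightarrow> real^'N \<Rightarrow> real \<Rightarrow> real" where
  "Lax M u p = inverse (p ^ M) * (\<Prod>i\<in>UNIV. p + u $ i)"

text \<open>Formal expansion at p = infinity, in the variable q = 1/p:
  L = q^(-(N-M)) * prod_i (1 + u^i q), and L^(1/(N-M)) = p * R(1/p) where R is the
  unique formal power series with constant term 1 and R^(N-M) = prod_i (1 + u^i q).
  Hence L^(n/(N-M)) = p^n * R(1/p)^n, whose coefficient of p^(n-s) is the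
  s-th coefficient of R^n.\<close>
definition Lroot :: "nat \<Rightarrow> real^'N \<Rightarrow> real fps" where
  "Lroot M u = (THE R. fps_nth R 0 = 1 \<and>
      R ^ (CARD('N) - M) = (\<Prod>i\<in>UNIV. 1 + fps_const (u $ i) * fps_X))"

definition Lpow_coeff :: "nat \<Rightarrow> nat \<Rightarrow> nat \<Rightarrow> real^'N \<Rightarrow> real" where
  "Lpow_coeff M n s u = fps_nth ((Lroot M u) ^ n) s"

definition Lpow_plus :: "nat \<Rightarrow> nat \<Rightarrow> real^'N \<Rightarrow> real \<Rightarrow> real" where
  "Lpow_plus M n u p = (\<Sum>s=0..n. Lpow_coeff M n s u * p ^ (n - s))"

definition Qdens :: "nat \<Rightarrow> nat \<Rightarrow> real^'N \<Rightarrow> real" where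
  "Qdens M n u = (\<Sum>r\<in>{r::'N \<Rightarrow> nat. sum r UNIV = n}.
       \<Prod>i\<in>UNIV. (alpha CARD('N) M n gchoose (r i)) * (u $ i) ^ (r i))"

definition gup :: "nat \<Rightarrow> real^'N \<Rightarrow> real^'N^'N" where
  "gup M u = (\<chi> i j. if i = j then (1 - (real CARD('N) - real M)) * (u $ i) * (u $ i)
                        else (u $ i) * (u $ j))"

definition glow :: "nat \<Rightarrow> real^'N \<Rightarrow> real^'N^'N" where
  "glow M u = matrix_inv (gup M u)"

definition pd :: "(real^'N \<Rightarrow> real) \<Rightarrow> 'N \<Rightarrow> real^'N \<Rightarrow> real" where
  "pd f k u = deriv (\<lambda>t. f (u + t *\<^sub>R axis k 1)) 0"

text \<open>Christoffel symbols Gamma^j_{sk} of the Levi-Civita connection of glow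
  (using that gup is the inverse of glow).\<close>
definition Chr :: "nat \<Rightarrow> 'N \<Rightarrow> 'N \<Rightarrow> 'N \<Rightarrow> real^'N \<Rightarrow> real" where
  "Chr M j s k u = (1/2) * (\<Sum>l\<in>UNIV. (gup M u) $ j $ l *
      (pd (\<lambda>v. glow M v $ l $ k) s u + pd (\<lambda>v. glow M v $ l $ s) k u
       - pd (\<lambda>v. glow M v $ s $ k) l u))"

definition Chr_up :: "nat \<Rightarrow> 'N \<Rightarrow> 'N \<Rightarrow> 'N \<Rightarrow> real^'N \<Rightarrow> real" where
  "Chr_up M i j k u = - (\<Sum>s\<in>UNIV. (gup M u) $ i $ s * Chr M j s k u)"

definition Riem :: "nat \<Rightarrow> 'N \<Rightarrow> 'N \<Rightarrow> 'N \<Rightarrow> 'N \<Rightarrow> real^'N \<Rightarrow> real" where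
  "Riem M i j k l u = pd (Chr M i l j) k u - pd (Chr M i k j) l u
     + (\<Sum>m\<in>UNIV. Chr M i k m u * Chr M m l j u - Chr M i l m u * Chr M m k j u)"

text \<open>The n-th Lax equation dL/dtau = {(L^(n/(N-M)))_+, L}_PB at the point (x,tau),
  for u depending on (x, tau); identity of Laurent polynomials in p, i.e. for all p \<noteq> 0.\<close>
definition Lax_eq_at :: "nat \<Rightarrow> nat \<Rightarrow> (real \<Rightarrow> real \<Rightarrow> real^'N) \<Rightarrow> real \<Rightarrow> real \<Rightarrow> bool" where
  "Lax_eq_at M n u x tau \<longleftrightarrow> (\<forall>p. p \<noteq> 0 \<longrightarrow>
     deriv (\<lambda>t. Lax M (u x t) p) tau =
       p * (deriv (\<lambda>q. Lpow_plus M n (u x tau) q) p * deriv (\<lambda>y. Lax M (u y tau) p) x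
          - deriv (\<lambda>y. Lpow_plus M n (u y tau) p) x * deriv (\<lambda>q. Lax M (u x tau) q) p))"

text \<open>Hamiltonian flow u^i_tau = (g^{ij} d/dx + Gamma^{ij}_k u^k_x) deltaH/delta u^j at (x,tau),
  for H = int h(u) dx, so deltaH/delta u^j = dh/du^j.\<close>
definition Ham_eq_at :: "nat \<Rightarrow> (real^'N \<Rightarrow> real) \<Rightarrow> (real \<Rightarrow> real \<Rightarrow> real^'N) \<Rightarrow> real \<Rightarrow> real \<Rightarrow> bool" where
  "Ham_eq_at M h u x tau \<longleftrightarrow> (\<forall>i.
     deriv (\<lambda>t. u x t $ i) tau =
       (\<Sum>j\<in>UNIV. (gup M (u x tau)) $ i $ j * deriv (\<lambda>y. pd h j (u y tau)) x)
       + (\<Sum>j\<in>UNIV. \<Sum>k\<in>UNIV. Chr_up M i j k (u x tau) * deriv (\<lambda>y. u y tau $ k) x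
                                 * pd h j (u x tau)))"

end

theory Submission
  imports Defs
begin

(* Put q = 1/p.  Then L = q^(M-N) prod_i (1 + u^i q), so L^(n/(N-M)) = p^n F(q) with
   F = prod_i (1 + u^i q)^a, a = n/(N-M), a product of binomial series: Q^(n) is the q^n
   coefficient of F, and (L^(n/(N-M)))_+ is the polynomial part of p^n F(1/p).

   The metric is g^ij = u^i u^j eta^ij with a constant matrix eta, i.e. it is constant in the
   coordinates log u^i.  Hence it is flat, its only Christoffel symbols are Gamma^i_ii = -1/u^i,
   and the Hamiltonian flow of h reads u^i_tau = u^i d/dx (sum_j eta^ij u^j dh/du^j).  For
   h = Q^(n)/n, Euler's identity for the homogeneous series F turns this into
   u^i_tau = u^i d/dx Phi_i, where Phi_i is the q^n coefficient of F/(1 + u^i q).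

   On the Lax side, synthetic division of the truncated series by each factor p + u^i of p^M L
   expands p^M times the bracket in the polynomials prod_(j ~= i) (p + u^j), with exactly the
   coefficients u^i d/dx Phi_i.  So the Hamiltonian flow solves the Lax equation, and conversely,
   when the u^i are distinct these polynomials are linearly independent (evaluate at p = -u^i). *)

notation fps_nth (infixl "$$" 75)

section \<open>Binomial series\<close>

definition binom_fps :: "real \<Rightarrow> real \<Rightarrow> real fps" where
  "binom_fps a c = fps_binomial a oo (fps_const c * fps_X)"

lemma binom_fps_nth [simp]: "binom_fps a c $$ r = (a gchoose r) * c ^ r"
  unfolding binom_fps_def fps_nth_compose_linear fps_binomial_nth by (rule mult.commute)

lemma binom_fps_add: "binom_fps (a + b) c = binom_fps a c * binom_fps b c"
  by (simp add: binom_fps_def fps_binomial_add_mult fps_compose_mult_distrib)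

lemma binom_fps_one: "binom_fps 1 c = 1 + fps_const c * fps_X"
  by (simp add: binom_fps_def fps_binomial_1 fps_compose_add_distrib)

lemma binom_fps_power: "binom_fps a c ^ m = binom_fps (of_nat m * a) c"
  by (simp add: binom_fps_def fps_compose_power fps_binomial_power)

lemma binom_fps_minus_one_inverse: "binom_fps (-1) c * (1 + fps_const c * fps_X) = 1"
proof -
  have "binom_fps (-1) c * (1 + fps_const c * fps_X) = binom_fps (-1 + 1) c"
    by (simp only: binom_fps_add binom_fps_one)
  then show ?thesis by (simp add: binom_fps_def)
qed

lemma binom_fps_minus_one_eq: "binom_fps (-1) c = 1 - fps_const c * fps_X * binom_fps (-1) c"
  using binom_fps_minus_one_inverse[of c] by (simp add: algebra_simps)

lemma binom_fps_diff_one: "binom_fps (a - 1) c = binom_fps a c * binom_fps (-1) c"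
  using binom_fps_add[of a "-1" c] by simp

lemma fps_deriv_binom_fps: "fps_deriv (binom_fps a c) = fps_const (a * c) * binom_fps (a - 1) c"
proof (rule fps_ext)
  fix r
  have "of_nat (Suc r) * (a gchoose Suc r) = a * ((a - 1) gchoose r)"
    by (rule gbinomial_absorption)
  then show "fps_deriv (binom_fps a c) $$ r = (fps_const (a * c) * binom_fps (a - 1) c) $$ r"
    by (simp add: algebra_simps)
qed

lemma gbinomial_minus_one: "((-1::'a::field_char_0) gchoose r) = (-1) ^ r"
  using gbinomial_minus[of "1::'a" r] binomial_gbinomial[of r r, where 'a='a] by simp

lemma gbinomial_minus_two: "((-2::'a::field_char_0) gchoose r) = (-1) ^ r * (of_nat r + 1)"
  using gbinomial_minus[of "2::'a" r] binomial_gbinomial[of "Suc r" r, where 'a='a]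
  by (simp add: add.commute)

lemma fps_deriv_prod:
  fixes f :: "'i \<Rightarrow> 'a::comm_ring_1 fps"
  assumes "finite I"
  shows "fps_deriv (\<Prod>i\<in>I. f i) = (\<Sum>m\<in>I. fps_deriv (f m) * (\<Prod>i\<in>I - {m}. f i))"
  using assms
proof (induction I rule: finite_induct)
  case (insert a I)
  have remove: "insert a I - {m} = insert a (I - {m})" if "m \<in> I" for m
    using insert.hyps that by auto
  have "fps_deriv (\<Prod>i\<in>insert a I. f i)
      = fps_deriv (f a) * (\<Prod>i\<in>I. f i) + f a * (\<Sum>m\<in>I. fps_deriv (f m) * (\<Prod>i\<in>I - {m}. f i))"
    using insert by (simp add: mult.commute)
  also have "f a * (\<Sum>m\<in>I. fps_deriv (f m) * (\<Prod>i\<in>I - {m}. f i))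
      = (\<Sum>m\<in>I. fps_deriv (f m) * (\<Prod>i\<in>insert a I - {m}. f i))"
    using insert.hyps by (auto simp: sum_distrib_left remove mult_ac intro!: sum.cong)
  finally show ?case
    using insert.hyps by (simp add: Diff_insert_absorb)
qed simp

section \<open>Coefficientwise derivatives of series-valued functions\<close>

definition has_coeff_derivative :: "(real \<Rightarrow> real fps) \<Rightarrow> real fps \<Rightarrow> real \<Rightarrow> bool" where
  "has_coeff_derivative f D x \<longleftrightarrow> (\<forall>s. ((\<lambda>y. f y $$ s) has_real_derivative D $$ s) (at x))"

lemma has_coeff_derivative_const: "has_coeff_derivative (\<lambda>y. c) 0 x"
  by (simp add: has_coeff_derivative_def)

lemma has_coeff_derivative_mult:
  assumes "has_coeff_derivative f D x" "has_coeff_derivative g E x"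
  shows "has_coeff_derivative (\<lambda>y. f y * g y) (D * g x + f x * E) x"
  unfolding has_coeff_derivative_def
proof
  fix s
  have "((\<lambda>y. \<Sum>i=0..s. f y $$ i * g y $$ (s - i)) has_real_derivative
         (\<Sum>i=0..s. D $$ i * g x $$ (s - i) + E $$ (s - i) * f x $$ i)) (at x)"
    using assms unfolding has_coeff_derivative_def by (intro DERIV_sum DERIV_mult) auto
  then show "((\<lambda>y. (f y * g y) $$ s) has_real_derivative (D * g x + f x * E) $$ s) (at x)"
    by (simp only: fps_add_nth fps_mult_nth sum.distrib) (simp add: mult.commute)
qed

lemma has_coeff_derivative_prod:
  fixes f :: "'i \<Rightarrow> real \<Rightarrow> real fps"
  assumes "finite I" "\<And>i. i \<in> I \<Longrightarrow> has_coeff_derivative (f i) (D i) x"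
  shows "has_coeff_derivative (\<lambda>y. \<Prod>i\<in>I. f i y) (\<Sum>m\<in>I. D m * (\<Prod>i\<in>I - {m}. f i x)) x"
  using assms
proof (induction I rule: finite_induct)
  case empty
  then show ?case by (simp add: has_coeff_derivative_def)
next
  case (insert a I)
  have remove: "insert a I - {m} = insert a (I - {m})" if "m \<in> I" for m
    using insert.hyps that by auto
  have "has_coeff_derivative (\<lambda>y. f a y * (\<Prod>i\<in>I. f i y))
      (D a * (\<Prod>i\<in>I. f i x) + f a x * (\<Sum>m\<in>I. D m * (\<Prod>i\<in>I - {m}. f i x))) x"
    using insert by (intro has_coeff_derivative_mult) auto
  moreover have "f a x * (\<Sum>m\<in>I. D m * (\<Prod>i\<in>I - {m}. f i x))
      = (\<Sum>m\<in>I. D m * (\<Prod>i\<in>insert a I - {m}. f i x))"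
    using insert.hyps by (auto simp: sum_distrib_left remove mult_ac intro!: sum.cong)
  ultimately show ?case
    using insert.hyps by (simp add: Diff_insert_absorb)
qed

lemma has_coeff_derivative_binom_fps:
  assumes "(w has_real_derivative w') (at x)"
  shows "has_coeff_derivative (\<lambda>y. binom_fps a (w y))
           (fps_X * (fps_const (a * w') * binom_fps (a - 1) (w x))) x"
  unfolding has_coeff_derivative_def
proof
  fix r
  have "((\<lambda>y. (a gchoose r) * w y ^ r) has_real_derivative
          (a gchoose r) * (of_nat r * w x ^ (r - 1) * w')) (at x)"
    using DERIV_cmult[OF DERIV_power[OF assms, of r], of "a gchoose r"] by (simp add: mult_ac)
  moreover have "(a gchoose r) * (of_nat r * w x ^ (r - 1) * w')
      = (fps_X * (fps_const (a * w') * binom_fps (a - 1) (w x))) $$ r"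
  proof (cases r)
    case (Suc k)
    have "(a gchoose r) * (of_nat r * w x ^ (r - 1) * w')
        = (of_nat (Suc k) * (a gchoose Suc k)) * (w x ^ k * w')"
      using Suc by (simp only: diff_Suc_1 mult_ac)
    also have "\<dots> = a * w' * (((a - 1) gchoose k) * w x ^ k)"
      by (simp only: gbinomial_absorption mult_ac)
    finally show ?thesis
      using Suc by simp
  qed simp
  ultimately show "((\<lambda>y. binom_fps a (w y) $$ r) has_real_derivative
      (fps_X * (fps_const (a * w') * binom_fps (a - 1) (w x))) $$ r) (at x)"
    by simp
qed

section \<open>The product of binomial series\<close>

definition binom_prod :: "real \<Rightarrow> real^'N \<Rightarrow> real fps" where
  "binom_prod a v = (\<Prod>i\<in>UNIV. binom_fps a (v $ i))"

lemma binom_prod_nth_0: "binom_prod a v $$ 0 = 1"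
  by (simp add: binom_prod_def fps_prod_nth')

lemma binom_prod_remove:
  "binom_prod a v = binom_fps a (v $ m) * (\<Prod>i\<in>UNIV - {m}. binom_fps a (v $ i))"
  unfolding binom_prod_def by (rule prod.remove) auto

lemma binom_prod_factor_sum:
  "(\<Sum>m\<in>UNIV. fps_const (a * d m) * binom_fps (a - 1) (v $ m) * (\<Prod>i\<in>UNIV - {m}. binom_fps a (v $ i)))
   = fps_const a * binom_prod a v * (\<Sum>m\<in>UNIV. fps_const (d m) * binom_fps (-1) (v $ m))"
  unfolding sum_distrib_left
proof (rule sum.cong)
  fix m
  show "fps_const (a * d m) * binom_fps (a - 1) (v $ m) * (\<Prod>i\<in>UNIV - {m}. binom_fps a (v $ i))
      = fps_const a * binom_prod a v * (fps_const (d m) * binom_fps (-1) (v $ m))"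
    unfolding binom_prod_remove[of a v m] binom_fps_diff_one
    by (simp add: fps_const_mult[symmetric] mult_ac del: fps_const_mult)
qed simp

lemma fps_deriv_binom_prod:
  "fps_deriv (binom_prod a v)
   = fps_const a * binom_prod a v * (\<Sum>m\<in>UNIV. fps_const (v $ m) * binom_fps (-1) (v $ m))"
proof -
  have "fps_deriv (binom_prod a v)
      = (\<Sum>m\<in>UNIV. fps_deriv (binom_fps a (v $ m)) * (\<Prod>i\<in>UNIV - {m}. binom_fps a (v $ i)))"
    unfolding binom_prod_def by (rule fps_deriv_prod) simp
  then show ?thesis by (simp only: fps_deriv_binom_fps binom_prod_factor_sum)
qed

definition binom_prod_deriv :: "real \<Rightarrow> real^'N \<Rightarrow> ('N \<Rightarrow> real) \<Rightarrow> real fps" where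
  "binom_prod_deriv a v w' =
     fps_const a * fps_X * binom_prod a v * (\<Sum>m\<in>UNIV. fps_const (w' m) * binom_fps (-1) (v $ m))"

lemma binom_prod_has_coeff_derivative:
  fixes w :: "real \<Rightarrow> real^'N"
  assumes "\<And>i. ((\<lambda>y. w y $ i) has_real_derivative w' i) (at x)"
  shows "has_coeff_derivative (\<lambda>y. binom_prod a (w y)) (binom_prod_deriv a (w x) w') x"
proof -
  have "has_coeff_derivative (\<lambda>y. \<Prod>i\<in>UNIV. binom_fps a (w y $ i))
     (\<Sum>m\<in>UNIV. fps_X * (fps_const (a * w' m) * binom_fps (a - 1) (w x $ m))
                 * (\<Prod>i\<in>UNIV - {m}. binom_fps a (w x $ i))) x"
    by (intro has_coeff_derivative_prod has_coeff_derivative_binom_fps assms) simp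
  also have "(\<Sum>m\<in>UNIV. fps_X * (fps_const (a * w' m) * binom_fps (a - 1) (w x $ m))
                 * (\<Prod>i\<in>UNIV - {m}. binom_fps a (w x $ i)))
      = fps_X * (\<Sum>m\<in>UNIV. fps_const (a * w' m) * binom_fps (a - 1) (w x $ m)
                 * (\<Prod>i\<in>UNIV - {m}. binom_fps a (w x $ i)))"
    by (simp only: sum_distrib_left mult.assoc)
  also have "\<dots> = fps_X * (fps_const a * binom_prod a (w x)
                 * (\<Sum>m\<in>UNIV. fps_const (w' m) * binom_fps (-1) (w x $ m)))"
    by (simp only: binom_prod_factor_sum)
  finally show ?thesis
    unfolding binom_prod_def[symmetric] binom_prod_deriv_def by (simp only: mult_ac)
qed

lemma bij_betw_count_multisets_of_size:
  "bij_betw count (multisets_of_size (UNIV::'a::finite set) n) {r. sum r UNIV = n}"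
proof (rule bij_betwI')
  have size_eq: "size X = sum (count X) UNIV" for X :: "'a multiset"
    unfolding size_multiset_overloaded_eq
    by (rule sum.mono_neutral_left) (auto simp: not_in_iff)
  show "count X \<in> {r. sum r UNIV = n}" if "X \<in> multisets_of_size (UNIV::'a set) n" for X
    using that size_eq[of X] by (simp add: multisets_of_size_def)
  show "\<exists>X\<in>multisets_of_size UNIV n. r = count X" if "r \<in> {r. sum r (UNIV::'a set) = n}" for r
  proof
    have "count (Abs_multiset r) = r" by (rule count_Abs_multiset) simp
    then show "Abs_multiset r \<in> multisets_of_size UNIV n" "r = count (Abs_multiset r)"
      using that size_eq[of "Abs_multiset r"] by (simp_all add: multisets_of_size_def)
  qed
qed (simp add: count_inject)

lemma Qdens_eq_binom_prod_nth:
  "Qdens M n (u::real^'N) = binom_prod (alpha CARD('N) M n) u $$ n"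
proof -
  let ?a = "alpha CARD('N) M n"
  have "binom_prod ?a u $$ n
      = (\<Sum>X\<in>multisets_of_size UNIV n. \<Prod>i\<in>UNIV. binom_fps ?a (u $ i) $$ count X i)"
    unfolding binom_prod_def by (rule fps_prod_nth') simp
  also have "\<dots> = (\<Sum>r\<in>{r::'N \<Rightarrow> nat. sum r UNIV = n}. \<Prod>i\<in>UNIV. binom_fps ?a (u $ i) $$ r i)"
    by (rule sum.reindex_bij_betw[OF bij_betw_count_multisets_of_size])
  finally show ?thesis by (simp add: Qdens_def)
qed

lemma Lroot_eq_binom_prod:
  assumes "M < CARD('N)"
  shows "Lroot M (u::real^'N) = binom_prod (1 / (real CARD('N) - real M)) u"
  unfolding Lroot_def
proof (rule the_equality)
  let ?R = "binom_prod (1 / (real CARD('N) - real M)) u"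
  have "real CARD('N) - real M = real (CARD('N) - M)"
    using assms by (simp add: of_nat_diff)
  then have pow: "?R ^ (CARD('N) - M) = (\<Prod>i\<in>UNIV. 1 + fps_const (u $ i) * fps_X)"
    using assms by (simp add: binom_prod_def prod_power_distrib binom_fps_power binom_fps_one)
  then show "?R $$ 0 = 1 \<and> ?R ^ (CARD('N) - M) = (\<Prod>i\<in>UNIV. 1 + fps_const (u $ i) * fps_X)"
    by (simp add: binom_prod_nth_0)
  show "R = ?R" if "R $$ 0 = 1 \<and> R ^ (CARD('N) - M) = (\<Prod>i\<in>UNIV. 1 + fps_const (u $ i) * fps_X)"
    for R
    by (rule fps_power_eqD[of R "CARD('N) - M" ?R]) (use that pow assms in \<open>auto simp: binom_prod_nth_0\<close>)
qed

lemma Lpow_coeff_eq_binom_prod_nth: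
  assumes "M < CARD('N)"
  shows "Lpow_coeff M n s (u::real^'N) = binom_prod (alpha CARD('N) M n) u $$ s"
  by (simp add: Lpow_coeff_def Lroot_eq_binom_prod[OF assms] binom_prod_def prod_power_distrib
      binom_fps_power alpha_def)

lemma Qdens_eq_Lpow_coeff:
  assumes "M < CARD('N)"
  shows "Qdens M n (u::real^'N) = Lpow_coeff M n n u"
  by (simp add: Qdens_eq_binom_prod_nth Lpow_coeff_eq_binom_prod_nth[OF assms])

section \<open>The metric and its curvature\<close>

definition gconst :: "nat \<Rightarrow> 'N::finite \<Rightarrow> 'N \<Rightarrow> real" where
  "gconst M i j = (if i = j then 1 - (real CARD('N) - real M) else 1)"

lemma gup_nth: "gup M (u::real^'N) $ i $ j = u $ i * u $ j * gconst M i j"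
  by (simp add: gup_def gconst_def)

(* gconst = J - (N-M) I with J the all-ones matrix; its inverse is J/((N-M) M) - I/(N-M). *)
definition gdown :: "nat \<Rightarrow> real^'N \<Rightarrow> real^'N^'N" where
  "gdown M u = (\<chi> i j. (1 / ((real CARD('N) - real M) * real M)
       - (if i = j then 1 / (real CARD('N) - real M) else 0)) / (u $ i * u $ j))"

lemma gdown_nth:
  "gdown M (u::real^'N) $ i $ j = (1 / ((real CARD('N) - real M) * real M)
       - (if i = j then 1 / (real CARD('N) - real M) else 0)) / (u $ i * u $ j)"
  by (simp add: gdown_def)

lemma gup_mult_gdown:
  fixes u :: "real^'N"
  assumes "0 < M" "M < CARD('N)" and nz: "\<forall>i. u $ i \<noteq> 0"
  shows "gup M u ** gdown M u = mat 1"
proof -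
  define k where "k = real CARD('N) - real M"
  define c where "c = 1 / (k * real M)"
  define d where "d = 1 / k"
  have k0: "k > 0" using assms by (simp add: k_def)
  have entry: "gup M u $ i $ l * gdown M u $ l $ j =
      (u $ i / u $ j) * ((if i = l then 1 - k else 1) * c
                          - (if l = j then (if i = j then 1 - k else 1) * d else 0))" for i l j
    using nz unfolding gup_nth gconst_def gdown_nth k_def[symmetric] c_def[symmetric] d_def[symmetric]
    by (auto simp: field_simps)
  have row_sum: "(\<Sum>l\<in>UNIV. (if i = l then 1 - k else 1) * c) = c * (real CARD('N) - k)" for i :: 'N
  proof -
    have "(\<Sum>l\<in>UNIV. (if i = l then 1 - k else 1) * c) = (\<Sum>l\<in>UNIV. c - (if i = l then k * c else 0))"
      by (rule sum.cong) (auto simp: algebra_simps)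
    then show ?thesis by (simp add: sum_subtractf algebra_simps)
  qed
  have cd: "c * (real CARD('N) - k) = d"
    using assms k0 by (simp add: c_def d_def k_def)
  have "(gup M u ** gdown M u) $ i $ j = mat 1 $ i $ j" for i j
  proof -
    have "(gup M u ** gdown M u) $ i $ j
        = (u $ i / u $ j) * ((\<Sum>l\<in>UNIV. (if i = l then 1 - k else 1) * c)
            - (\<Sum>l\<in>UNIV. if l = j then (if i = j then 1 - k else 1) * d else 0))"
      unfolding matrix_matrix_mult_def entry
      by (simp only: vec_lambda_beta sum_distrib_left[symmetric] sum_subtractf)
    also have "\<dots> = (u $ i / u $ j) * (c * (real CARD('N) - k) - (if i = j then 1 - k else 1) * d)"
      by (simp only: row_sum sum.delta' finite_UNIV) simp
    also have "\<dots> = mat 1 $ i $ j"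
      using nz k0 by (auto simp: cd mat_def d_def field_simps)
    finally show ?thesis .
  qed
  then show ?thesis by (simp add: vec_eq_iff)
qed

lemma
  fixes u :: "real^'N"
  assumes "0 < M" "M < CARD('N)" "\<forall>i. u $ i \<noteq> 0"
  shows glow_eq_gdown: "glow M u = gdown M u"
    and det_gup_nonzero: "det (gup M u) \<noteq> 0"
    and gup_mult_glow: "gup M u ** glow M u = mat 1"
proof -
  have right: "gup M u ** gdown M u = mat 1" by (rule gup_mult_gdown[OF assms])
  then have left: "gdown M u ** gup M u = mat 1" by (simp add: matrix_left_right_inverse)
  have "invertible (gup M u)" unfolding invertible_def using right left by blast
  then show "det (gup M u) \<noteq> 0" by (simp add: invertible_det_nz)
  have unique: "A = gdown M u" if "gup M u ** A = mat 1 \<and> A ** gup M u = mat 1" for A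
  proof -
    have "A = A ** (gup M u ** gdown M u)" using right by simp
    then show ?thesis using that by (simp add: matrix_mul_assoc)
  qed
  show glow: "glow M u = gdown M u"
    unfolding glow_def matrix_inv_def by (rule unique, rule someI[of _ "gdown M u"]) (use right left in blast)
  show "gup M u ** glow M u = mat 1" using glow right by simp
qed

lemma pd_eqI:
  assumes nz: "\<forall>i. v $ i \<noteq> 0"
    and eq: "\<And>t. \<forall>i. (v + t *\<^sub>R axis s 1) $ i \<noteq> 0 \<Longrightarrow> f (v + t *\<^sub>R axis s 1) = g t"
    and g: "(g has_real_derivative D) (at 0)"
  shows "pd f s v = D"
proof -
  have "open {t::real. v $ s + t \<noteq> 0}"
    by (intro open_Collect_neq continuous_intros)
  moreover have "f (v + t *\<^sub>R axis s 1) = g t" if "v $ s + t \<noteq> 0" for t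
    using that nz by (intro eq) (auto simp: axis_def)
  ultimately have "((\<lambda>t. f (v + t *\<^sub>R axis s 1)) has_real_derivative D) (at 0)"
    using nz by (intro has_field_derivative_transform_within_open[OF g]) auto
  then show ?thesis unfolding pd_def by (rule DERIV_imp_deriv)
qed

lemma pd_glow:
  fixes v :: "real^'N"
  assumes M: "0 < M" "M < CARD('N)" and nz: "\<forall>i. v $ i \<noteq> 0"
  shows "pd (\<lambda>w. glow M w $ l $ k) s v =
     - ((if l = s then 1 / v $ l else 0) + (if k = s then 1 / v $ k else 0)) * glow M v $ l $ k"
proof -
  define C where "C = 1 / ((real CARD('N) - real M) * real M)
       - (if l = k then 1 / (real CARD('N) - real M) else 0)"
  define a where "a t = v $ l + (if l = s then t else 0)" for t :: real
  define b where "b t = v $ k + (if k = s then t else 0)" for t :: real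
  have "(a has_real_derivative (if l = s then 1 else 0)) (at 0)"
    and "(b has_real_derivative (if k = s then 1 else 0)) (at 0)"
    unfolding a_def b_def by (auto intro!: derivative_eq_intros)
  then have "((\<lambda>t. C / (a t * b t)) has_real_derivative
      - C * ((if l = s then 1 else 0) * b 0 + a 0 * (if k = s then 1 else 0)) / (a 0 * b 0)^2) (at 0)"
    using nz by (auto intro!: derivative_eq_intros simp: a_def b_def power2_eq_square)
  then have "pd (\<lambda>w. glow M w $ l $ k) s v
      = - C * ((if l = s then 1 else 0) * b 0 + a 0 * (if k = s then 1 else 0)) / (a 0 * b 0)^2"
    by (rule pd_eqI[OF nz, rotated])
      (simp add: glow_eq_gdown[OF M] gdown_nth axis_def C_def a_def b_def)
  also have "\<dots> = - ((if l = s then 1 / v $ l else 0) + (if k = s then 1 / v $ k else 0)) * glow M v $ l $ k"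
    using nz unfolding glow_eq_gdown[OF M nz] gdown_nth C_def[symmetric]
    by (cases "l = s"; cases "k = s") (simp_all add: a_def b_def power2_eq_square field_simps)
  finally show ?thesis .
qed

lemma glow_sym:
  fixes v :: "real^'N"
  assumes "0 < M" "M < CARD('N)" "\<forall>i. v $ i \<noteq> 0"
  shows "glow M v $ l $ k = glow M v $ k $ l"
  by (simp add: glow_eq_gdown[OF assms] gdown_nth mult.commute eq_commute)

lemma Chr_eq:
  fixes v :: "real^'N"
  assumes "0 < M" "M < CARD('N)" "\<forall>i. v $ i \<noteq> 0"
  shows "Chr M j s k v = (if j = s \<and> s = k then - 1 / v $ j else 0)"
proof -
  have pd_sum: "pd (\<lambda>w. glow M w $ l $ k) s v + pd (\<lambda>w. glow M w $ l $ s) k v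
      - pd (\<lambda>w. glow M w $ s $ k) l v = - 2 * (if s = k then glow M v $ l $ s / v $ s else 0)" for l
    unfolding pd_glow[OF assms]
    using glow_sym[OF assms, of l k] glow_sym[OF assms, of l s] glow_sym[OF assms, of s k]
    by (cases "l = s"; cases "l = k"; cases "s = k") (simp_all add: field_simps)
  have "Chr M j s k v
      = (\<Sum>l\<in>UNIV. gup M v $ j $ l * glow M v $ l $ s) * (if s = k then - 1 / v $ s else 0)"
    unfolding Chr_def pd_sum sum_distrib_left sum_distrib_right
    by (rule sum.cong) (auto simp: field_simps)
  also have "\<dots> = (if j = s \<and> s = k then - 1 / v $ j else 0)"
    using gup_mult_glow[OF assms] by (auto simp: matrix_matrix_mult_def vec_eq_iff mat_def)
  finally show ?thesis .
qed

lemma pd_Chr: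
  fixes v :: "real^'N"
  assumes M: "0 < M" "M < CARD('N)" and nz: "\<forall>i. v $ i \<noteq> 0"
  shows "pd (Chr M i l j) k v = (if i = l \<and> l = j \<and> i = k then 1 / (v $ i)^2 else 0)"
proof (rule pd_eqI[OF nz])
  let ?g = "\<lambda>t. if i = l \<and> l = j then - 1 / (v $ i + (if i = k then t else 0)) else 0"
  show "Chr M i l j (v + t *\<^sub>R axis k 1) = ?g t" if "\<forall>i. (v + t *\<^sub>R axis k 1) $ i \<noteq> 0" for t
    using that by (simp add: Chr_eq[OF M] axis_def)
  show "(?g has_real_derivative (if i = l \<and> l = j \<and> i = k then 1 / (v $ i)^2 else 0)) (at 0)"
    using nz by (cases "i = l \<and> l = j"; cases "i = k")
      (auto intro!: derivative_eq_intros simp: power2_eq_square)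
qed

lemma Chr_contract:
  fixes v :: "real^'N"
  assumes "0 < M" "M < CARD('N)" "\<forall>i. v $ i \<noteq> 0"
  shows "(\<Sum>m\<in>UNIV. Chr M i k m v * Chr M m l j v)
       = (if i = k \<and> k = l \<and> l = j then 1 / (v $ i)^2 else 0)"
proof -
  have "(\<Sum>m\<in>UNIV. Chr M i k m v * Chr M m l j v)
      = (\<Sum>m\<in>UNIV. if m = k then (if i = k \<and> k = l \<and> l = j then 1 / (v $ i)^2 else 0) else 0)"
    unfolding Chr_eq[OF assms] by (rule sum.cong) (auto simp: power2_eq_square)
  then show ?thesis by simp
qed

lemma Riem_eq_0:
  fixes v :: "real^'N"
  assumes "0 < M" "M < CARD('N)" "\<forall>i. v $ i \<noteq> 0"
  shows "Riem M i j k l v = 0"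
proof -
  have "(i = l \<and> l = j \<and> i = k) = (i = k \<and> k = j \<and> i = l)"
    and "(i = k \<and> k = l \<and> l = j) = (i = l \<and> l = k \<and> k = j)"
    by blast+
  then show ?thesis
    unfolding Riem_def sum_subtractf pd_Chr[OF assms] Chr_contract[OF assms] by simp
qed

lemma Chr_up_contract:
  fixes v :: "real^'N"
  assumes "0 < M" "M < CARD('N)" "\<forall>i. v $ i \<noteq> 0"
  shows "(\<Sum>l\<in>UNIV. Chr_up M i j l v * w l) = gup M v $ i $ j * w j / v $ j"
proof -
  have "Chr_up M i j l v = (if l = j then gup M v $ i $ j / v $ j else 0)" for l
  proof -
    have "(\<Sum>s\<in>UNIV. gup M v $ i $ s * Chr M j s l v)
        = (\<Sum>s\<in>UNIV. if s = j then (if j = l then - gup M v $ i $ j / v $ j else 0) else 0)"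
      unfolding Chr_eq[OF assms] by (rule sum.cong) auto
    then show ?thesis unfolding Chr_up_def by auto
  qed
  then have "(\<Sum>l\<in>UNIV. Chr_up M i j l v * w l)
      = (\<Sum>l\<in>UNIV. if l = j then gup M v $ i $ j * w j / v $ j else 0)"
    by (intro sum.cong) auto
  then show ?thesis by simp
qed

section \<open>Polynomial parts of series in \<open>q = 1/p\<close>\<close>

(* trunc_poly d g p is p^(d-1) g(1/p) with all negative powers of p dropped. *)

definition trunc_poly :: "nat \<Rightarrow> real fps \<Rightarrow> real \<Rightarrow> real" where
  "trunc_poly d g p = (\<Sum>s<d. g $$ s * p ^ (d - 1 - s))"

lemma trunc_poly_Suc: "trunc_poly (Suc d) g p = p * trunc_poly d g p + g $$ d"
proof -
  have "(\<Sum>s<d. g $$ s * p ^ (d - s)) = p * trunc_poly d g p"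
    unfolding trunc_poly_def sum_distrib_left
    by (rule sum.cong) (auto simp: Suc_diff_Suc power_Suc[symmetric] simp del: power_Suc)
  then show ?thesis by (simp add: trunc_poly_def)
qed

lemma trunc_poly_fps_X_mult: "trunc_poly (Suc d) (fps_X * g) p = trunc_poly d g p"
  unfolding trunc_poly_def sum.lessThan_Suc_shift by simp

lemma trunc_poly_add: "trunc_poly d (f + g) p = trunc_poly d f p + trunc_poly d g p"
  by (simp add: trunc_poly_def sum.distrib algebra_simps)

lemma trunc_poly_const_mult: "trunc_poly d (fps_const c * f) p = c * trunc_poly d f p"
  by (simp add: trunc_poly_def sum_distrib_left algebra_simps)

lemma trunc_poly_sum: "trunc_poly d (\<Sum>m\<in>I. f m) p = (\<Sum>m\<in>I. trunc_poly d (f m) p)"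
  unfolding trunc_poly_def fps_sum_nth sum_distrib_right by (rule sum.swap)

lemma trunc_poly_synthetic_division:
  "trunc_poly (Suc d) h p
   = (p + c) * trunc_poly d (h * binom_fps (-1) c) p + (h * binom_fps (-1) c) $$ d"
proof -
  let ?q = "h * binom_fps (-1) c"
  have "h = ?q * (1 + fps_const c * fps_X)"
    by (simp add: mult.assoc binom_fps_minus_one_inverse)
  also have "\<dots> = ?q + fps_const c * (fps_X * ?q)"
    by (simp add: algebra_simps)
  finally have h_eq: "h = ?q + fps_const c * (fps_X * ?q)" .
  have "trunc_poly (Suc d) (?q + fps_const c * (fps_X * ?q)) p
      = p * trunc_poly d ?q p + ?q $$ d + c * trunc_poly d ?q p"
    by (simp only: trunc_poly_add trunc_poly_const_mult trunc_poly_fps_X_mult) (simp only: trunc_poly_Suc)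
  then show ?thesis
    unfolding h_eq[symmetric] by (simp add: algebra_simps)
qed

lemma trunc_poly_has_coeff_derivative:
  assumes "has_coeff_derivative f D x"
  shows "((\<lambda>y. trunc_poly d (f y) p) has_real_derivative trunc_poly d D p) (at x)"
  using assms unfolding trunc_poly_def has_coeff_derivative_def
  by (intro DERIV_sum) (auto intro!: DERIV_cmult_right)

definition p_deriv_series :: "nat \<Rightarrow> real fps \<Rightarrow> real fps" where
  "p_deriv_series n F = Abs_fps (\<lambda>s. (real n - real s) * F $$ s)"

lemma p_deriv_series_nth [simp]: "p_deriv_series n F $$ s = (real n - real s) * F $$ s"
  by (simp add: p_deriv_series_def)

lemma p_deriv_series_eq: "p_deriv_series n F = fps_const (real n) * F - fps_X * fps_deriv F"
  by (rule fps_ext) (auto simp: algebra_simps fps_X_mult_nth)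

lemma trunc_poly_has_derivative_p:
  "((\<lambda>q. trunc_poly (Suc n) F q) has_real_derivative trunc_poly n (p_deriv_series n F) q) (at q)"
proof -
  have "((\<lambda>q. \<Sum>s<Suc n. F $$ s * q ^ (n - s)) has_real_derivative
      (\<Sum>s<Suc n. F $$ s * (real (n - s) * q ^ (n - s - Suc 0)))) (at q)"
    by (intro DERIV_sum DERIV_cmult DERIV_pow)
  moreover have "(\<Sum>s<Suc n. F $$ s * (real (n - s) * q ^ (n - s - Suc 0)))
      = trunc_poly n (p_deriv_series n F) q"
    unfolding trunc_poly_def by (auto simp: of_nat_diff intro!: sum.cong)
  ultimately show ?thesis by (simp add: trunc_poly_def)
qed

lemma binom_fps_minus_two_nth:
  "(F * binom_fps (-2) c) $$ n = (p_deriv_series (Suc n) F * binom_fps (-1) c) $$ n"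
  unfolding fps_mult_nth
proof (rule sum.cong)
  fix i assume "i \<in> {0..n}"
  then have "real (n - i) + 1 = real (Suc n) - real i" by (simp add: of_nat_diff)
  then show "F $$ i * binom_fps (-2) c $$ (n - i)
      = p_deriv_series (Suc n) F $$ i * binom_fps (-1) c $$ (n - i)"
    by (simp add: gbinomial_minus_one gbinomial_minus_two)
qed simp

section \<open>The Lax equation\<close>

lemma Lpow_plus_eq_trunc_poly:
  assumes "M < CARD('N)"
  shows "Lpow_plus M n (v::real^'N) q = trunc_poly (Suc n) (binom_prod (alpha CARD('N) M n) v) q"
  unfolding Lpow_plus_def trunc_poly_def Lpow_coeff_eq_binom_prod_nth[OF assms]
  by (rule sum.cong) auto

lemma Lpow_plus_has_derivative_p:
  assumes "M < CARD('N)"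
  shows "((\<lambda>q. Lpow_plus M n (v::real^'N) q) has_real_derivative
      trunc_poly n (p_deriv_series n (binom_prod (alpha CARD('N) M n) v)) q) (at q)"
  unfolding Lpow_plus_eq_trunc_poly[OF assms] by (rule trunc_poly_has_derivative_p)

lemma Lpow_plus_has_derivative_along:
  fixes w :: "real \<Rightarrow> real^'N"
  assumes "M < CARD('N)" and "\<And>i. ((\<lambda>y. w y $ i) has_real_derivative w' i) (at x)"
  shows "((\<lambda>y. Lpow_plus M n (w y) p) has_real_derivative
      trunc_poly (Suc n) (binom_prod_deriv (alpha CARD('N) M n) (w x) w') p) (at x)"
  unfolding Lpow_plus_eq_trunc_poly[OF assms(1)]
  by (intro trunc_poly_has_coeff_derivative binom_prod_has_coeff_derivative assms(2))

lemma Lax_has_derivative_along: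
  fixes w :: "real \<Rightarrow> real^'N"
  assumes "\<And>i. ((\<lambda>t. w t $ i) has_real_derivative w' i) (at t0)"
  shows "((\<lambda>t. Lax M (w t) p) has_real_derivative
      inverse (p ^ M) * (\<Sum>m\<in>UNIV. w' m * (\<Prod>j\<in>UNIV - {m}. p + w t0 $ j))) (at t0)"
  unfolding Lax_def
  by (intro DERIV_cmult has_field_derivative_prod) (auto intro!: derivative_eq_intros assms)

lemma Lax_has_derivative_p:
  fixes v :: "real^'N"
  assumes "p \<noteq> 0"
  shows "((\<lambda>q. Lax M v q) has_real_derivative inverse (p ^ M) *
      ((\<Sum>i\<in>UNIV. \<Prod>j\<in>UNIV - {i}. p + v $ j) - real M * (\<Prod>j\<in>UNIV. p + v $ j) / p)) (at p)"
proof -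
  have "((\<lambda>q. \<Prod>i\<in>UNIV. q + v $ i) has_real_derivative
      (\<Sum>i\<in>UNIV. 1 * (\<Prod>j\<in>UNIV - {i}. p + v $ j))) (at p)"
    by (intro has_field_derivative_prod) (auto intro!: derivative_eq_intros)
  moreover have "((\<lambda>q. inverse (q ^ M)) has_real_derivative
      - (real M * p ^ (M - Suc 0) * inverse ((p ^ M)\<^sup>2))) (at p)"
    using DERIV_inverse_fun[OF DERIV_pow[of M p], of UNIV] assms by (simp add: power2_eq_square)
  moreover have "real M * p ^ (M - Suc 0) = real M * p ^ M / p"
    using assms by (cases M) auto
  ultimately show ?thesis
    unfolding Lax_def using assms
    by (auto intro!: derivative_eq_intros simp: power2_eq_square field_simps)
qed

(* u^i d/dx Phi_i, expressed through u and u_x (see binom_prod_div_has_derivative) *)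
definition lax_flow :: "nat \<Rightarrow> nat \<Rightarrow> real^'N \<Rightarrow> ('N \<Rightarrow> real) \<Rightarrow> 'N \<Rightarrow> real" where
  "lax_flow M n v ux i =
     v $ i * ((binom_prod_deriv (alpha CARD('N) M n) v ux * binom_fps (-1) (v $ i)) $$ n
       - ux i * (p_deriv_series n (binom_prod (alpha CARD('N) M n) v) * binom_fps (-1) (v $ i))
                  $$ (n - 1))"

lemma binom_prod_flow_series:
  assumes "k * a = real n"
  shows "fps_X * (\<Sum>m\<in>UNIV. fps_const (ux m) * (p_deriv_series n (binom_prod a v) * binom_fps (-1) (v $ m))
                 + fps_const (v $ m) * (binom_prod_deriv a v ux * binom_fps (-1) (v $ m)))
       = fps_const k * binom_prod_deriv a v ux"
proof -
  define F where "F = binom_prod a v"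
  define S1 where "S1 = (\<Sum>m\<in>UNIV. fps_const (v $ m) * binom_fps (-1) (v $ m))"
  define S2 where "S2 = (\<Sum>m\<in>UNIV. fps_const (ux m) * binom_fps (-1) (v $ m))"
  have "(\<Sum>m\<in>UNIV. fps_const (ux m) * (p_deriv_series n F * binom_fps (-1) (v $ m))
                 + fps_const (v $ m) * (binom_prod_deriv a v ux * binom_fps (-1) (v $ m)))
      = p_deriv_series n F * S2 + binom_prod_deriv a v ux * S1"
    by (simp add: S1_def S2_def sum.distrib sum_distrib_left mult_ac)
  also have "\<dots> = (fps_const (real n) * F - fps_const a * fps_X * F * S1) * S2
                   + fps_const a * fps_X * F * S2 * S1"
    by (simp add: p_deriv_series_eq fps_deriv_binom_prod binom_prod_deriv_def F_def S1_def S2_def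
        mult_ac)
  also have "\<dots> = fps_const (k * a) * F * S2"
    unfolding assms by (simp add: algebra_simps)
  finally show ?thesis
    by (simp add: binom_prod_deriv_def F_def S2_def mult_ac)
qed

lemma trunc_poly_flow_identity:
  assumes "k * a = real n"
  shows "(\<Sum>m\<in>UNIV. ux m * trunc_poly n (p_deriv_series n (binom_prod a v) * binom_fps (-1) (v $ m)) p
                 + v $ m * trunc_poly n (binom_prod_deriv a v ux * binom_fps (-1) (v $ m)) p)
       = k * trunc_poly (Suc n) (binom_prod_deriv a v ux) p"
  using arg_cong[OF binom_prod_flow_series[OF assms], of "\<lambda>f. trunc_poly (Suc n) f p"]
  by (simp add: trunc_poly_fps_X_mult trunc_poly_sum trunc_poly_add trunc_poly_const_mult)

lemma lax_bracket_expansion: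
  fixes v :: "real^'N" and ux :: "'N \<Rightarrow> real"
  assumes MN: "M < CARD('N)" and n1: "1 \<le> n" and p0: "p \<noteq> 0"
  defines "a \<equiv> alpha CARD('N) M n"
  defines "A \<equiv> trunc_poly n (p_deriv_series n (binom_prod a v)) p"
    and "A' \<equiv> trunc_poly (Suc n) (binom_prod_deriv a v ux) p"
    and "P \<equiv> \<Prod>j\<in>UNIV. p + v $ j"
    and "PP \<equiv> \<lambda>i. \<Prod>j\<in>UNIV - {i}. p + v $ j"
  shows "p * (A * (\<Sum>m\<in>UNIV. ux m * PP m) - A' * ((\<Sum>m\<in>UNIV. PP m) - real M * P / p))
       = (\<Sum>m\<in>UNIV. lax_flow M n v ux m * PP m)"
proof -
  obtain n' where n: "n = Suc n'" using n1 by (cases n) auto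
  define k where "k = real CARD('N) - real M"
  define g where "g = p_deriv_series n (binom_prod a v)"
  define Fx where "Fx = binom_prod_deriv a v ux"
  define B where "B m = binom_fps (-1) (v $ m)" for m
  have ka: "k * a = real n" using MN by (simp add: k_def a_def alpha_def)
  have P_eq: "P = (p + v $ m) * PP m" for m
    unfolding P_def PP_def by (rule prod.remove) auto
  have summand: "p * (ux m * A * PP m - A' * PP m)
      = P * (ux m * trunc_poly n (g * B m) p + v $ m * trunc_poly n (Fx * B m) p - A')
        + lax_flow M n v ux m * PP m" for m
  proof -
    have "A = (p + v $ m) * trunc_poly n' (g * B m) p + (g * B m) $$ n'"
      unfolding A_def g_def n B_def by (rule trunc_poly_synthetic_division)
    moreover have "A' = (p + v $ m) * trunc_poly n (Fx * B m) p + (Fx * B m) $$ n"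
      unfolding A'_def Fx_def B_def by (rule trunc_poly_synthetic_division)
    moreover have "trunc_poly n (g * B m) p = p * trunc_poly n' (g * B m) p + (g * B m) $$ n'"
      unfolding n by (rule trunc_poly_Suc)
    ultimately show ?thesis
      unfolding P_eq[of m] lax_flow_def a_def[symmetric] g_def[symmetric] Fx_def[symmetric]
        B_def[symmetric]
      using n by (simp add: algebra_simps)
  qed
  have "p * (A * (\<Sum>m\<in>UNIV. ux m * PP m) - A' * ((\<Sum>m\<in>UNIV. PP m) - real M * P / p))
      = (\<Sum>m\<in>UNIV. p * (ux m * A * PP m - A' * PP m)) + real M * A' * P"
    using p0 by (simp add: sum_distrib_left sum_subtractf algebra_simps)
  also have "\<dots> = P * ((\<Sum>m\<in>UNIV. ux m * trunc_poly n (g * B m) p + v $ m * trunc_poly n (Fx * B m) p)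
                       - k * A') + (\<Sum>m\<in>UNIV. lax_flow M n v ux m * PP m)"
    unfolding summand
    by (simp add: sum.distrib sum_subtractf sum_distrib_left[symmetric] k_def algebra_simps)
  also have "\<dots> = (\<Sum>m\<in>UNIV. lax_flow M n v ux m * PP m)"
    using trunc_poly_flow_identity[OF ka, of ux v p] unfolding A'_def g_def Fx_def B_def by simp
  finally show ?thesis .
qed

lemma Lax_eq_at_iff:
  fixes u :: "real \<Rightarrow> real \<Rightarrow> real^'N"
  assumes MN: "M < CARD('N)" and n1: "1 \<le> n"
    and dx: "\<And>i. ((\<lambda>y. u y tau $ i) has_real_derivative ux i) (at x)"
    and dt: "\<And>i. ((\<lambda>t. u x t $ i) has_real_derivative ut i) (at tau)"
  shows "Lax_eq_at M n u x tau \<longleftrightarrow> (\<forall>p. p \<noteq> 0 \<longrightarrow>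
           (\<Sum>i\<in>UNIV. ut i * (\<Prod>j\<in>UNIV - {i}. p + u x tau $ j))
         = (\<Sum>i\<in>UNIV. lax_flow M n (u x tau) ux i * (\<Prod>j\<in>UNIV - {i}. p + u x tau $ j)))"
proof -
  define v where "v = u x tau"
  define PP where "PP p i = (\<Prod>j\<in>UNIV - {i}. p + v $ j)" for p i
  let ?A = "trunc_poly n (p_deriv_series n (binom_prod (alpha CARD('N) M n) v))"
  let ?A' = "trunc_poly (Suc n) (binom_prod_deriv (alpha CARD('N) M n) v ux)"
  have "p * (?A p * (inverse (p ^ M) * (\<Sum>m\<in>UNIV. ux m * PP p m))
        - ?A' p * (inverse (p ^ M) * ((\<Sum>m\<in>UNIV. PP p m) - real M * (\<Prod>j\<in>UNIV. p + v $ j) / p)))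
      = inverse (p ^ M) * (\<Sum>m\<in>UNIV. lax_flow M n v ux m * PP p m)" if "p \<noteq> 0" for p
    unfolding lax_bracket_expansion[OF MN n1 that, of v ux, folded PP_def, symmetric]
    by (simp add: algebra_simps)
  then show ?thesis
    unfolding Lax_eq_at_def v_def[symmetric] PP_def[symmetric]
      DERIV_imp_deriv[OF Lax_has_derivative_along[OF dt]]
      DERIV_imp_deriv[OF Lax_has_derivative_along[OF dx]]
      DERIV_imp_deriv[OF Lpow_plus_has_derivative_p[OF MN]]
      DERIV_imp_deriv[OF Lpow_plus_has_derivative_along[OF MN dx]]
    by (auto simp: DERIV_imp_deriv[OF Lax_has_derivative_p] v_def PP_def)
qed

section \<open>The Hamiltonian flow\<close>

lemma pd_Qdens:
  fixes v :: "real^'N"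
  shows "pd (\<lambda>w. c * Qdens M n w) j v = c * alpha CARD('N) M n *
      (fps_X * binom_prod (alpha CARD('N) M n) v * binom_fps (-1) (v $ j)) $$ n"
proof -
  let ?a = "alpha CARD('N) M n"
  let ?w = "\<lambda>t. v + t *\<^sub>R axis j 1"
  have "((\<lambda>t. ?w t $ i) has_real_derivative (if i = j then 1 else 0)) (at 0)" for i
    by (auto simp: axis_def intro!: derivative_eq_intros)
  then have "has_coeff_derivative (\<lambda>t. binom_prod ?a (?w t))
      (binom_prod_deriv ?a v (\<lambda>i. if i = j then 1 else 0)) 0"
    using binom_prod_has_coeff_derivative[of ?w _ 0] by simp
  moreover have "(\<Sum>m\<in>UNIV. fps_const (if m = j then 1 else 0) * binom_fps (-1) (v $ m))
      = binom_fps (-1) (v $ j)"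
  proof -
    have "(\<Sum>m\<in>UNIV. fps_const (if m = j then 1 else 0) * binom_fps (-1) (v $ m))
        = (\<Sum>m\<in>UNIV. if m = j then binom_fps (-1) (v $ m) else 0)"
      by (rule sum.cong) auto
    then show ?thesis by simp
  qed
  then have "binom_prod_deriv ?a v (\<lambda>i. if i = j then 1 else 0)
      = fps_const ?a * (fps_X * binom_prod ?a v * binom_fps (-1) (v $ j))"
    unfolding binom_prod_deriv_def by (simp only: mult_ac)
  ultimately have "has_coeff_derivative (\<lambda>t. binom_prod ?a (?w t))
      (fps_const ?a * (fps_X * binom_prod ?a v * binom_fps (-1) (v $ j))) 0"
    by (simp only:)
  then have "((\<lambda>t. Qdens M n (?w t)) has_real_derivative
      ?a * (fps_X * binom_prod ?a v * binom_fps (-1) (v $ j)) $$ n) (at 0)"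
    unfolding has_coeff_derivative_def Qdens_eq_binom_prod_nth fps_mult_left_const_nth by (rule spec)
  then show ?thesis
    unfolding pd_def by (intro DERIV_imp_deriv) (auto intro!: derivative_eq_intros)
qed

lemma pd_Qdens_has_derivative:
  fixes w :: "real \<Rightarrow> real^'N"
  assumes "\<And>i. ((\<lambda>y. w y $ i) has_real_derivative w' i) (at x)"
  shows "\<exists>D. ((\<lambda>y. pd (\<lambda>v. c * Qdens M n v) j (w y)) has_real_derivative D) (at x)"
proof -
  let ?a = "alpha CARD('N) M n"
  have "has_coeff_derivative (\<lambda>y. fps_X * binom_prod ?a (w y) * binom_fps (-1) (w y $ j))
      ((0 * binom_prod ?a (w x) + fps_X * binom_prod_deriv ?a (w x) w') * binom_fps (-1) (w x $ j)
       + fps_X * binom_prod ?a (w x) * (fps_X * (fps_const (-1 * w' j) * binom_fps (-1 - 1) (w x $ j)))) x"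
    by (intro has_coeff_derivative_mult has_coeff_derivative_const binom_prod_has_coeff_derivative
        has_coeff_derivative_binom_fps assms)
  from DERIV_cmult[OF this[unfolded has_coeff_derivative_def, rule_format, of n]]
  show ?thesis
    unfolding pd_Qdens by (rule exI)
qed

lemma binom_prod_euler:
  fixes w :: "real^'N"
  assumes ka: "k * a = real n" and a0: "a \<noteq> 0"
  shows "(\<Sum>j\<in>UNIV. (if i = j then 1 - k else 1)
            * (w $ j * (fps_X * binom_prod a w * binom_fps (-1) (w $ j)) $$ n))
       = k * (binom_prod a w * binom_fps (-1) (w $ i)) $$ n"
proof -
  define F where "F = binom_prod a w"
  define T where "T j = w $ j * (fps_X * F * binom_fps (-1) (w $ j)) $$ n" for j
  have "fps_X * fps_deriv F
      = fps_const a * (\<Sum>j\<in>UNIV. fps_const (w $ j) * (fps_X * F * binom_fps (-1) (w $ j)))"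
    by (simp add: F_def fps_deriv_binom_prod sum_distrib_left mult_ac)
  then have "a * (\<Sum>j\<in>UNIV. T j) = (fps_X * fps_deriv F) $$ n"
    by (simp only: fps_mult_left_const_nth fps_sum_nth T_def)
  also have "\<dots> = k * a * F $$ n"
    unfolding ka by (cases n) auto
  finally have sum_T: "(\<Sum>j\<in>UNIV. T j) = k * F $$ n"
    using a0 by simp
  have "(\<Sum>j\<in>UNIV. (if i = j then 1 - k else 1) * T j) = (\<Sum>j\<in>UNIV. T j - (if j = i then k * T i else 0))"
    by (rule sum.cong) (auto simp: algebra_simps)
  also have "\<dots> = k * F $$ n - k * T i"
    by (simp add: sum_subtractf sum_T)
  also have "\<dots> = k * (F * (1 - fps_const (w $ i) * fps_X * binom_fps (-1) (w $ i))) $$ n"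
  proof -
    have "F * (1 - fps_const (w $ i) * fps_X * binom_fps (-1) (w $ i))
        = F - fps_const (w $ i) * (fps_X * F * binom_fps (-1) (w $ i))"
      by (simp add: algebra_simps)
    then show ?thesis
      unfolding T_def by (simp only: fps_sub_nth fps_mult_left_const_nth right_diff_distrib)
  qed
  finally show ?thesis
    unfolding T_def F_def binom_fps_minus_one_eq[symmetric] .
qed

lemma Qdens_euler:
  fixes w :: "real^'N"
  assumes "0 < M" "M < CARD('N)" "1 \<le> n"
  shows "(\<Sum>j\<in>UNIV. gconst M i j * (w $ j * pd (\<lambda>v. 1 / real n * Qdens M n v) j w))
       = (binom_prod (alpha CARD('N) M n) w * binom_fps (-1) (w $ i)) $$ n"
proof -
  define k where "k = real CARD('N) - real M"
  define a where "a = alpha CARD('N) M n"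
  define Psi where "Psi j = (fps_X * binom_prod a w * binom_fps (-1) (w $ j)) $$ n" for j
  have k0: "k > 0" using assms by (simp add: k_def)
  have ka: "k * a = real n" using k0 by (simp add: a_def alpha_def k_def)
  have a0: "a \<noteq> 0" using ka assms(3) by auto
  have "pd (\<lambda>v. 1 / real n * Qdens M n v) j w = Psi j / k" for j
    using assms k0 unfolding pd_Qdens Psi_def a_def k_def by (simp add: alpha_def)
  then have "(\<Sum>j\<in>UNIV. gconst M i j * (w $ j * pd (\<lambda>v. 1 / real n * Qdens M n v) j w))
      = (\<Sum>j\<in>UNIV. gconst M i j * (w $ j * Psi j)) / k"
    by (simp add: sum_divide_distrib)
  also have "(\<Sum>j\<in>UNIV. gconst M i j * (w $ j * Psi j)) = k * (binom_prod a w * binom_fps (-1) (w $ i)) $$ n"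
    unfolding gconst_def k_def[symmetric] Psi_def by (rule binom_prod_euler[OF ka a0])
  finally show ?thesis
    using k0 unfolding a_def by simp
qed

lemma binom_prod_div_has_derivative:
  fixes w :: "real \<Rightarrow> real^'N"
  assumes n1: "1 \<le> n" and dw: "\<And>j. ((\<lambda>y. w y $ j) has_real_derivative w' j) (at x)"
  shows "((\<lambda>y. (binom_prod a (w y) * binom_fps (-1) (w y $ i)) $$ n) has_real_derivative
      (binom_prod_deriv a (w x) w' * binom_fps (-1) (w x $ i)) $$ n
      - w' i * (p_deriv_series n (binom_prod a (w x)) * binom_fps (-1) (w x $ i)) $$ (n - 1)) (at x)"
proof -
  obtain n' where n: "n = Suc n'" using n1 by (cases n) auto
  let ?D = "binom_prod_deriv a (w x) w' * binom_fps (-1) (w x $ i)"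
  let ?E = "binom_prod a (w x) * (fps_X * (fps_const (-1 * w' i) * binom_fps (-1 - 1) (w x $ i)))"
  have "has_coeff_derivative (\<lambda>y. binom_prod a (w y) * binom_fps (-1) (w y $ i)) (?D + ?E) x"
    by (intro has_coeff_derivative_mult binom_prod_has_coeff_derivative
        has_coeff_derivative_binom_fps dw)
  then have deriv: "((\<lambda>y. (binom_prod a (w y) * binom_fps (-1) (w y $ i)) $$ n) has_real_derivative
      ?D $$ n + ?E $$ n) (at x)"
    unfolding has_coeff_derivative_def fps_add_nth by (rule spec)
  have E_eq: "?E = fps_const (- w' i) * (fps_X * (binom_prod a (w x) * binom_fps (-2) (w x $ i)))"
    by (simp add: algebra_simps)
  have "?E $$ n = - w' i * (p_deriv_series n (binom_prod a (w x)) * binom_fps (-1) (w x $ i)) $$ (n - 1)"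
    unfolding E_eq n by (simp add: binom_fps_minus_two_nth)
  then show ?thesis
    using deriv by (simp only: diff_conv_add_uminus minus_mult_left)
qed

lemma Ham_rhs_eq:
  fixes u :: "real \<Rightarrow> real^'N" and h :: "real^'N \<Rightarrow> real"
  assumes M: "0 < M" "M < CARD('N)" and nz: "\<forall>i. u x $ i \<noteq> 0"
    and du: "\<And>j. ((\<lambda>y. u y $ j) has_real_derivative u' j) (at x)"
    and dgrad: "\<And>j. ((\<lambda>y. pd h j (u y)) has_real_derivative D j) (at x)"
    and euler: "\<And>w. (\<Sum>j\<in>UNIV. gconst M i j * (w $ j * pd h j w)) = Phi w"
    and dPhi: "((\<lambda>y. Phi (u y)) has_real_derivative Phi') (at x)"
  shows "(\<Sum>j\<in>UNIV. gup M (u x) $ i $ j * D j)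
       + (\<Sum>j\<in>UNIV. \<Sum>l\<in>UNIV. Chr_up M i j l (u x) * u' l * pd h j (u x)) = u x $ i * Phi'"
proof -
  have "((\<lambda>y. \<Sum>j\<in>UNIV. gconst M i j * (u y $ j * pd h j (u y))) has_real_derivative
      (\<Sum>j\<in>UNIV. gconst M i j * (u' j * pd h j (u x) + D j * u x $ j))) (at x)"
    by (intro DERIV_sum DERIV_cmult DERIV_mult du dgrad)
  then have Phi': "(\<Sum>j\<in>UNIV. gconst M i j * (u' j * pd h j (u x) + D j * u x $ j)) = Phi'"
    unfolding euler using dPhi by (rule DERIV_unique)
  have "(\<Sum>l\<in>UNIV. Chr_up M i j l (u x) * u' l * pd h j (u x))
      = gup M (u x) $ i $ j * u' j / u x $ j * pd h j (u x)" for j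
    unfolding sum_distrib_right[symmetric] Chr_up_contract[OF M nz] ..
  then show ?thesis
    unfolding Phi'[symmetric] sum.distrib[symmetric] sum_distrib_left
    using nz by (intro sum.cong) (auto simp: gup_nth field_simps)
qed

lemma Ham_eq_at_iff:
  fixes u :: "real \<Rightarrow> real \<Rightarrow> real^'N"
  assumes M: "0 < M" "M < CARD('N)" and n1: "1 \<le> n" and nz: "\<forall>i. u x tau $ i \<noteq> 0"
    and dx: "\<And>i. ((\<lambda>y. u y tau $ i) has_real_derivative ux i) (at x)"
    and dt: "\<And>i. ((\<lambda>t. u x t $ i) has_real_derivative ut i) (at tau)"
  shows "Ham_eq_at M (\<lambda>v. 1 / real n * Qdens M n v) u x tau
     \<longleftrightarrow> (\<forall>i. ut i = lax_flow M n (u x tau) ux i)"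
proof -
  define h where "h = (\<lambda>w::real^'N. 1 / real n * Qdens M n w)"
  define Phi where "Phi i w = (binom_prod (alpha CARD('N) M n) w * binom_fps (-1) (w $ i)) $$ n"
    for i and w :: "real^'N"
  obtain D where dgrad: "((\<lambda>y. pd h j (u y tau)) has_real_derivative D j) (at x)" for j
    using pd_Qdens_has_derivative[OF dx] unfolding h_def by metis
  have "((\<lambda>y. Phi i (u y tau)) has_real_derivative lax_flow M n (u x tau) ux i / u x tau $ i) (at x)"
    for i
    using binom_prod_div_has_derivative[OF n1 dx] nz by (simp add: Phi_def lax_flow_def)
  from Ham_rhs_eq[OF M nz dx dgrad Qdens_euler[OF M n1, folded h_def Phi_def] this]
  have "(\<Sum>j\<in>UNIV. gup M (u x tau) $ i $ j * D j)
      + (\<Sum>j\<in>UNIV. \<Sum>l\<in>UNIV. Chr_up M i j l (u x tau) * ux l * pd h j (u x tau))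
      = lax_flow M n (u x tau) ux i" for i
    using nz by simp
  then show ?thesis
    unfolding Ham_eq_at_def h_def[symmetric] DERIV_imp_deriv[OF dt] DERIV_imp_deriv[OF dx]
      DERIV_imp_deriv[OF dgrad] by simp
qed

section \<open>Equivalence of the two flows\<close>

lemma vec_nth_has_real_derivative:
  fixes f :: "real \<Rightarrow> real^'N"
  assumes "f differentiable (at x)"
  shows "((\<lambda>y. f y $ i) has_real_derivative vector_derivative f (at x) $ i) (at x)"
proof -
  have "(f has_derivative (\<lambda>h. h *\<^sub>R vector_derivative f (at x))) (at x)"
    using assms vector_derivative_works by (auto simp: has_vector_derivative_def)
  then have "((\<lambda>y. f y $ i) has_derivative (\<lambda>h. (h *\<^sub>R vector_derivative f (at x)) $ i)) (at x)"
    by (rule bounded_linear.has_derivative[OF bounded_linear_vec_nth])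
  moreover have "(\<lambda>h. (h *\<^sub>R vector_derivative f (at x)) $ i) = (*) (vector_derivative f (at x) $ i)"
    by (auto simp: fun_eq_iff)
  ultimately show ?thesis
    by (simp add: has_field_derivative_def)
qed

lemma lagrange_basis_unique:
  fixes c d :: "'N::finite \<Rightarrow> real" and v :: "real^'N"
  assumes nz: "\<forall>i. v $ i \<noteq> 0" and distinct: "\<forall>i j. i \<noteq> j \<longrightarrow> v $ i \<noteq> v $ j"
    and eq: "\<forall>p. p \<noteq> 0 \<longrightarrow> (\<Sum>i\<in>UNIV. c i * (\<Prod>j\<in>UNIV - {i}. p + v $ j))
                              = (\<Sum>i\<in>UNIV. d i * (\<Prod>j\<in>UNIV - {i}. p + v $ j))"
  shows "c i = d i"
proof -
  define p where "p = - v $ i"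
  let ?PP = "\<lambda>j. \<Prod>l\<in>UNIV - {j}. p + v $ l"
  have PP_i: "?PP i \<noteq> 0"
    using distinct by (auto simp: p_def prod_zero_iff)
  have PP_j: "?PP j = 0" if "j \<noteq> i" for j
    using that by (intro prod_zero) (auto simp: p_def)
  have "(\<Sum>j\<in>UNIV. f j * ?PP j) = f i * ?PP i" for f :: "'N \<Rightarrow> real"
  proof -
    have "(\<Sum>j\<in>UNIV. f j * ?PP j) = (\<Sum>j\<in>UNIV. if j = i then f i * ?PP i else 0)"
      by (rule sum.cong) (auto simp: PP_j)
    then show ?thesis by simp
  qed
  moreover have "p \<noteq> 0" using nz by (simp add: p_def)
  ultimately show ?thesis
    using eq PP_i by auto
qed

lemma
  fixes u :: "real \<Rightarrow> real \<Rightarrow> real^'N"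
  assumes M: "0 < M" "M < CARD('N)" and n1: "1 \<le> n" and nz: "\<forall>y t. \<forall>i. u y t $ i \<noteq> 0"
    and diff: "\<forall>y t. (\<lambda>y'. u y' t) differentiable (at y) \<and> (\<lambda>t'. u y t') differentiable (at t)"
  shows Ham_eq_at_imp_Lax_eq_at: "Ham_eq_at M (\<lambda>v. 1 / real n * Qdens M n v) u x tau \<Longrightarrow> Lax_eq_at M n u x tau"
    and Lax_eq_at_imp_Ham_eq_at:
      "\<forall>i j. i \<noteq> j \<longrightarrow> u x tau $ i \<noteq> u x tau $ j \<Longrightarrow> Lax_eq_at M n u x tau
      \<Longrightarrow> Ham_eq_at M (\<lambda>v. 1 / real n * Qdens M n v) u x tau"
proof -
  define ux where "ux i = vector_derivative (\<lambda>y. u y tau) (at x) $ i" for i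
  define ut where "ut i = vector_derivative (\<lambda>t. u x t) (at tau) $ i" for i
  have dx: "((\<lambda>y. u y tau $ i) has_real_derivative ux i) (at x)"
    and dt: "((\<lambda>t. u x t $ i) has_real_derivative ut i) (at tau)" for i
    unfolding ux_def ut_def using diff by (auto intro: vec_nth_has_real_derivative)
  have nz': "\<forall>i. u x tau $ i \<noteq> 0" using nz by blast
  note Lax = Lax_eq_at_iff[OF M(2) n1 dx dt]
  note Ham = Ham_eq_at_iff[OF M n1 nz' dx dt]
  show "Ham_eq_at M (\<lambda>v. 1 / real n * Qdens M n v) u x tau \<Longrightarrow> Lax_eq_at M n u x tau"
    unfolding Lax Ham by simp
  show "Ham_eq_at M (\<lambda>v. 1 / real n * Qdens M n v) u x tau"
    if "\<forall>i j. i \<noteq> j \<longrightarrow> u x tau $ i \<noteq> u x tau $ j" and "Lax_eq_at M n u x tau"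
    using that lagrange_basis_unique[OF nz'] unfolding Lax Ham by blast
qed

theorem proposition3:
  fixes M n :: nat
  assumes "0 < M" and "M < CARD('N::finite)" and "1 \<le> n"
  shows
    \<comment> \<open>Q^(n) is the coefficient of p^0 in L^(n/(N-M))\<close>
    "(\<forall>u::real^'N. Qdens M n u = Lpow_coeff M n n u)
     \<comment> \<open>the metric is non-degenerate\<close>
     \<and> (\<forall>u::real^'N. (\<forall>i. u $ i \<noteq> 0) \<longrightarrow> det (gup M u) \<noteq> 0)
     \<comment> \<open>the metric is flat\<close>
     \<and> (\<forall>u::real^'N. (\<forall>i. u $ i \<noteq> 0) \<longrightarrow> (\<forall>i j k l. Riem M i j k l u = 0))
     \<comment> \<open>the n-th flow is Hamiltonian with H = c * int Q^(n) dx\<close>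
     \<and> (\<exists>c::real. c \<noteq> 0 \<and>
          (\<forall>(u::real \<Rightarrow> real \<Rightarrow> real^'N) x tau.
             (\<forall>y t. \<forall>i. u y t $ i \<noteq> 0) \<longrightarrow>
             (\<forall>y t. (\<lambda>y'. u y' t) differentiable (at y) \<and> (\<lambda>t'. u y t') differentiable (at t)) \<longrightarrow>
             (Ham_eq_at M (\<lambda>v. c * Qdens M n v) u x tau \<longrightarrow> Lax_eq_at M n u x tau) \<and>
             ((\<forall>i j. i \<noteq> j \<longrightarrow> u x tau $ i \<noteq> u x tau $ j) \<longrightarrow>
                Lax_eq_at M n u x tau \<longrightarrow> Ham_eq_at M (\<lambda>v. c * Qdens M n v) u x tau)))"
proof -
  have "1 / real n \<noteq> 0" using assms(3) by simp
  then show ?thesis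
    using Qdens_eq_Lpow_coeff[OF assms(2)] det_gup_nonzero[OF assms(1,2)] Riem_eq_0[OF assms(1,2)]
      Ham_eq_at_imp_Lax_eq_at[OF assms] Lax_eq_at_imp_Ham_eq_at[OF assms]
    by (intro conjI allI impI exI[of _ "1 / real n"]) blast+
qed

end
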